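(* Let $A \subset \mathbb{R}$ be finite, let $K>0$, and suppose that $E^{\times}(A) \geq \frac{|A|^3}{K}$. Then there is a subset $A'\subseteq A$ and a number $\Delta \gg |A|/K$ such that $$|A'|\gtrsim\frac{|A|^2}{K\Delta}\qquad\text{and}\qquad d_*(A')\lesssim \frac{K|A'|^2}{|A|\Delta}.$$
   Context: $E^{\times}(A)$ is the number of solutions of $a_1/b_1=a_2/b_2$ with $a_i,b_i\in A$. For finite $A\subset\mathbb{R}$, define $$d_*(A)=\min_{t>0}\ \min_{Q,R} \frac{|Q|^2|R|^2}{|A|t^3},$$ where the inner minimum is over nonempty finite sets $Q,R\subset\mathbb{R}\setminus\{0\}$ with $\max\{|Q|,|R|\}\ge |A|$ such that $|Q\cap aR^{-1}|\ge t$ for every $a\in A$ (here $aR^{-1}=\{a/r: r\in R\}$). Notation: $X\ll Y$ / $Y\gg X$ means $X\le cY$ for an absolute constant $c>0$; $X\gtrsim Y$ (equivalently $Y\lesssim X$) means there is an absolute constant $c>0$ with $X\gg Y/(\log X)^c$, i.e. constant and logarithmic factors are suppressed. Logarithms are base 2. *)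

theory Defs
  imports Complex_Main
begin

definition mult_energy :: "real set \<Rightarrow> nat" where
  "mult_energy A = card {(a1, b1, a2, b2). a1 \<in> A \<and> b1 \<in> A \<and> a2 \<in> A \<and> b2 \<in> A \<and>
      b1 \<noteq> 0 \<and> b2 \<noteq> 0 \<and> a1 / b1 = a2 / b2}"

definition dil_inv :: "real \<Rightarrow> real set \<Rightarrow> real set" where
  "dil_inv a R = (\<lambda>r. a / r) ` R"

definition d_star :: "real set \<Rightarrow> real" where
  "d_star A = Inf {real (card Q) ^ 2 * real (card R) ^ 2 / (real (card A) * t ^ 3) | t Q R.
      t > 0 \<and> finite Q \<and> finite R \<and> Q \<noteq> {} \<and> R \<noteq> {} \<and> 0 \<notin> Q \<and> 0 \<notin> R \<and>
      max (card Q) (card R) \<ge> card A \<and>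
      (\<forall>a\<in>A. real (card (Q \<inter> dil_inv a R)) \<ge> t)}"

end

theory Submission
  imports Defs
begin

text \<open>
  Write \<open>r(x)\<close> for the number of pairs \<open>(a, b) \<in> A\<^sup>2\<close> with \<open>a / b = x\<close>, so that
  \<open>E(A) \<le> \<Sum>\<^sub>x r(x)\<^sup>2\<close>. A dyadic pigeonhole on \<open>r\<close> yields a level \<open>\<lambda>\<close> and the set \<open>P\<close> of
  popular quotients with \<open>E(A) \<lesssim> \<lambda>\<^sup>2 |P|\<close>. Double counting the incidences \<open>x b \<in> A\<close>
  (\<open>x \<in> P\<close>, \<open>b \<in> A\<close>) and a second dyadic pigeonhole yields \<open>\<tau>\<close> and the set \<open>A'\<close> of those
  \<open>b\<close> lying in at least \<open>\<tau>\<close> incidences. Then \<open>Q = A\<close>, \<open>R = P\<^sup>-\<^sup>1\<close>, \<open>t = \<tau>\<close> witness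
  \<open>d\<^sub>*(A') \<le> |A|\<^sup>2 |P|\<^sup>2 / (|A'| \<tau>\<^sup>3)\<close>, and the two pigeonhole inequalities turn this into
  \<open>|A|\<^sup>3 d\<^sub>*(A') \<lesssim> K\<^sup>2 |A'|\<^sup>3\<close>, from which \<open>\<Delta>\<close> is chosen. The element \<open>0\<close> contributes at
  most \<open>|A|\<^sup>2\<close> to the energy; if that is the bulk of it, \<open>A \<setminus> {0}\<close> itself works, with \<open>R = {1}\<close>.
\<close>

lemma pow2_floor_log_bounds:
  fixes w :: real
  assumes "1 \<le> w"
  shows "2 ^ nat \<lfloor>log 2 w\<rfloor> \<le> w" and "w < 2 ^ (nat \<lfloor>log 2 w\<rfloor> + 1)"
proof -
  have k: "real (nat \<lfloor>log 2 w\<rfloor>) = of_int \<lfloor>log 2 w\<rfloor>"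
    using assms by simp
  have "(2::real) ^ nat \<lfloor>log 2 w\<rfloor> = 2 powr of_int \<lfloor>log 2 w\<rfloor>"
    by (metis k powr_realpow zero_less_numeral)
  also have "\<dots> \<le> 2 powr log 2 w" by (intro powr_mono) auto
  finally show "2 ^ nat \<lfloor>log 2 w\<rfloor> \<le> w" using assms by simp
  have "w = 2 powr log 2 w" using assms by simp
  also have "\<dots> < 2 powr (of_int \<lfloor>log 2 w\<rfloor> + 1)" by (intro powr_less_mono) linarith+
  also have "\<dots> = 2 ^ (nat \<lfloor>log 2 w\<rfloor> + 1)"
    by (metis k of_nat_Suc Suc_eq_plus1 add.commute powr_realpow zero_less_numeral)
  finally show "w < 2 ^ (nat \<lfloor>log 2 w\<rfloor> + 1)" .
qed

lemma dyadic_pigeonhole: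
  fixes S :: "'a set" and w :: "'a \<Rightarrow> real" and N :: real and p :: nat
  assumes fin: "finite S" and w_ge: "\<And>s. s \<in> S \<Longrightarrow> 1 \<le> w s" and w_le: "\<And>s. s \<in> S \<Longrightarrow> w s \<le> N"
  shows "\<exists>l\<ge>1. (\<Sum>s\<in>S. w s ^ p) \<le> 2 ^ p * log 2 (2 * N) * l ^ p * card {s\<in>S. l \<le> w s}"
proof (cases "S = {}")
  case True
  thus ?thesis by (intro exI[of _ 1]) auto
next
  case False
  hence N_ge: "1 \<le> N" using w_ge w_le by force
  define k where "k s = nat \<lfloor>log 2 (w s)\<rfloor>" for s
  define D where "D = nat \<lfloor>log 2 N\<rfloor> + 1"
  define T where "T j = 2 ^ p * (2 ^ j) ^ p * real (card {s\<in>S. 2 ^ j \<le> w s})" for j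
  have k_lt: "k s < D" if "s \<in> S" for s
    using floor_mono[of "log 2 (w s)" "log 2 N"] w_ge[OF that] w_le[OF that]
    unfolding k_def D_def by simp
  have level: "(\<Sum>s\<in>{s\<in>S. k s = j}. ((2::real) ^ (j + 1)) ^ p) \<le> T j" for j
  proof -
    have "{s\<in>S. k s = j} \<subseteq> {s\<in>S. 2 ^ j \<le> w s}"
      using pow2_floor_log_bounds(1) w_ge unfolding k_def by auto
    hence "card {s\<in>S. k s = j} \<le> card {s\<in>S. 2 ^ j \<le> w s}"
      by (intro card_mono) (use fin in auto)
    thus ?thesis unfolding T_def
      by (simp add: power_mult_distrib power_add mult_right_mono mult_ac)
  qed
  obtain j0 where "j0 < D" and j0_max: "T j0 = Max (T ` {..<D})"
  proof -
    have "Max (T ` {..<D}) \<in> T ` {..<D}" by (rule Max_in) (auto simp: D_def)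
    thus thesis using that by auto
  qed
  have "(\<Sum>s\<in>S. w s ^ p) \<le> (\<Sum>s\<in>S. ((2::real) ^ (k s + 1)) ^ p)"
    using pow2_floor_log_bounds(2) w_ge unfolding k_def
    by (intro sum_mono power_mono) (auto intro: less_imp_le order.trans[OF zero_le_one])
  also have "\<dots> = (\<Sum>j<D. \<Sum>s\<in>{s\<in>S. k s = j}. ((2::real) ^ (j + 1)) ^ p)"
    by (subst sum.group[symmetric, where g = k]) (use fin k_lt in auto)
  also have "\<dots> \<le> (\<Sum>j<D. T j0)"
  proof (intro sum_mono)
    fix j assume "j \<in> {..<D}"
    hence "T j \<le> T j0" unfolding j0_max by (intro Max_ge) auto
    thus "(\<Sum>s\<in>{s\<in>S. k s = j}. ((2::real) ^ (j + 1)) ^ p) \<le> T j0"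
      using level[of j] by linarith
  qed
  also have "\<dots> \<le> log 2 (2 * N) * T j0"
  proof -
    have "real D = of_int \<lfloor>log 2 N\<rfloor> + 1" unfolding D_def using N_ge by simp
    also have "\<dots> \<le> log 2 N + 1" by linarith
    also have "\<dots> = log 2 (2 * N)" using N_ge by (simp add: log_mult)
    finally show ?thesis by (simp add: T_def mult_right_mono)
  qed
  finally show ?thesis by (intro exI[of _ "2 ^ j0"]) (auto simp: T_def mult_ac)
qed

definition quot_set :: "real set \<Rightarrow> real set" where
  "quot_set A = (\<lambda>(a, b). a / b) ` (A \<times> A)"

text \<open>For \<open>0 \<notin> A\<close>, \<open>quot_rep A x\<close> is the paper's \<open>r\<^sub>A\<^sub>/\<^sub>A(x)\<close>, the number of pairs
  \<open>(a, b) \<in> A\<^sup>2\<close> with \<open>a / b = x\<close>.\<close>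

definition quot_rep :: "real set \<Rightarrow> real \<Rightarrow> nat" where
  "quot_rep A x = card {b \<in> A. x * b \<in> A}"

lemma finite_quot_set: "finite A \<Longrightarrow> finite (quot_set A)"
  by (simp add: quot_set_def)

lemma zero_notin_quot_set: "0 \<notin> A \<Longrightarrow> 0 \<notin> quot_set A"
  by (auto simp: quot_set_def)

lemma quot_rep_pos: "finite A \<Longrightarrow> 0 \<notin> A \<Longrightarrow> x \<in> quot_set A \<Longrightarrow> 0 < quot_rep A x"
  by (auto simp: quot_set_def quot_rep_def card_gt_0_iff)

lemma card_mult_mem_le:
  fixes A P :: "real set"
  assumes "finite A" and "b \<noteq> 0"
  shows "card {x \<in> P. x * b \<in> A} \<le> card A"
proof -
  have "card {x \<in> P. x * b \<in> A} = card ((\<lambda>x. x * b) ` {x \<in> P. x * b \<in> A})"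
    by (rule card_image[symmetric]) (use assms(2) in \<open>auto simp: inj_on_def\<close>)
  also have "\<dots> \<le> card A" by (rule card_mono[OF assms(1)]) auto
  finally show ?thesis .
qed

lemma mult_energy_le_sum_quot_rep:
  assumes fin: "finite A"
  shows "mult_energy A \<le> (\<Sum>x\<in>quot_set A. quot_rep A x ^ 2)"
proof -
  define G where "G x = {b \<in> A. x * b \<in> A}" for x
  define emb where "emb = (\<lambda>(x, b1, b2). (x * b1, b1, x * b2, b2 :: real))"
  have fin_Sigma: "finite (SIGMA x:quot_set A. G x \<times> G x)"
    using fin by (auto simp: G_def finite_quot_set)
  have "{(a1, b1, a2, b2). a1 \<in> A \<and> b1 \<in> A \<and> a2 \<in> A \<and> b2 \<in> A \<and>
      b1 \<noteq> 0 \<and> b2 \<noteq> 0 \<and> a1 / b1 = a2 / b2} \<subseteq> emb ` (SIGMA x:quot_set A. G x \<times> G x)"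
  proof clarify
    fix a1 b1 a2 b2 assume h: "a1 \<in> A" "b1 \<in> A" "a2 \<in> A" "b2 \<in> A"
      "b1 \<noteq> 0" "b2 \<noteq> 0" "a1 / b1 = a2 / b2"
    have e1: "a1 / b1 * b1 = a1" using h(5) by simp
    have e2: "a1 / b1 * b2 = a2" using h by (metis nonzero_eq_divide_eq times_divide_eq_left)
    have x: "a1 / b1 \<in> quot_set A" unfolding quot_set_def using h by force
    show "(a1, b1, a2, b2) \<in> emb ` (SIGMA x:quot_set A. G x \<times> G x)"
      by (rule image_eqI[of _ _ "(a1 / b1, b1, b2)"]) (use e1 e2 x h in \<open>auto simp: emb_def G_def\<close>)
  qed
  hence "mult_energy A \<le> card (emb ` (SIGMA x:quot_set A. G x \<times> G x))"
    unfolding mult_energy_def by (intro card_mono finite_imageI fin_Sigma)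
  also have "\<dots> \<le> card (SIGMA x:quot_set A. G x \<times> G x)" by (rule card_image_le[OF fin_Sigma])
  also have "\<dots> = (\<Sum>x\<in>quot_set A. card (G x) ^ 2)"
    using fin by (subst card_SigmaI) (auto simp: G_def finite_quot_set power2_eq_square card_cartesian_product)
  finally show ?thesis unfolding G_def quot_rep_def .
qed

lemma sum_card_mult_mem_eq_sum_quot_rep:
  assumes "finite A" and "finite P"
  shows "(\<Sum>b\<in>A. card {x \<in> P. x * b \<in> A}) = (\<Sum>x\<in>P. quot_rep A x)"
proof -
  have "(\<Sum>b\<in>A. card {x \<in> P. x * b \<in> A}) = (\<Sum>b\<in>A. \<Sum>x\<in>P. if x * b \<in> A then 1 else 0)"
    using assms(2) by (simp add: sum.If_cases Int_def conj_commute)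
  also have "\<dots> = (\<Sum>x\<in>P. \<Sum>b\<in>A. if x * b \<in> A then 1 else 0)" by (rule sum.swap)
  also have "\<dots> = (\<Sum>x\<in>P. quot_rep A x)"
    using assms(1) by (simp add: quot_rep_def sum.If_cases Int_def conj_commute)
  finally show ?thesis .
qed

lemma mult_energy_pos:
  assumes "finite A" and "a \<in> A" and "a \<noteq> 0"
  shows "0 < mult_energy A"
proof -
  have "finite {(a1, b1, a2, b2). a1 \<in> A \<and> b1 \<in> A \<and> a2 \<in> A \<and> b2 \<in> A \<and>
      b1 \<noteq> 0 \<and> b2 \<noteq> 0 \<and> a1 / b1 = a2 / b2}"
    by (rule finite_subset[of _ "A \<times> A \<times> A \<times> A"]) (use assms(1) in auto)
  thus ?thesis unfolding mult_energy_def using assms(2,3) by (auto simp: card_gt_0_iff)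
qed

lemma mult_energy_le_remove_zero:
  assumes fin: "finite A"
  shows "mult_energy A \<le> mult_energy (A - {0}) + card (A - {0}) ^ 2"
proof -
  define M where "M B = {(a1, b1, a2, b2). a1 \<in> B \<and> b1 \<in> B \<and> a2 \<in> B \<and> b2 \<in> B \<and>
      b1 \<noteq> (0::real) \<and> b2 \<noteq> 0 \<and> a1 / b1 = a2 / b2}" for B
  define Z :: "(real \<times> real \<times> real \<times> real) set"
    where "Z = (\<lambda>(b1, b2). (0, b1, 0, b2)) ` ((A - {0}) \<times> (A - {0}))"
  have "finite (M (A - {0}))"
    by (rule finite_subset[of _ "A \<times> A \<times> A \<times> A"]) (use fin in \<open>auto simp: M_def\<close>)
  moreover have "M A \<subseteq> M (A - {0}) \<union> Z"
    by (auto simp: M_def Z_def)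
  ultimately have "card (M A) \<le> card (M (A - {0}) \<union> Z)"
    by (intro card_mono) (use fin in \<open>auto simp: Z_def\<close>)
  also have "\<dots> \<le> card (M (A - {0})) + card Z" by (rule card_Un_le)
  also have "card Z \<le> card (A - {0}) ^ 2"
    unfolding Z_def power2_eq_square card_cartesian_product[symmetric] by (rule card_image_le) (use fin in auto)
  finally show ?thesis unfolding mult_energy_def M_def by simp
qed

lemma d_star_le:
  fixes A Q R :: "real set" and t :: real
  assumes "finite Q" "finite R" "Q \<noteq> {}" "R \<noteq> {}" "0 \<notin> Q" "0 \<notin> R"
    "card A \<le> max (card Q) (card R)" "t > 0" "\<And>a. a \<in> A \<Longrightarrow> t \<le> card (Q \<inter> dil_inv a R)"
  shows "d_star A \<le> real (card Q) ^ 2 * real (card R) ^ 2 / (real (card A) * t ^ 3)"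
  unfolding d_star_def
proof (rule cInf_lower)
  show "bdd_below {real (card Q) ^ 2 * real (card R) ^ 2 / (real (card A) * t ^ 3) | t Q R.
      t > 0 \<and> finite Q \<and> finite R \<and> Q \<noteq> {} \<and> R \<noteq> {} \<and> 0 \<notin> Q \<and> 0 \<notin> R \<and>
      max (card Q) (card R) \<ge> card A \<and> (\<forall>a\<in>A. real (card (Q \<inter> dil_inv a R)) \<ge> t)}"
    by (rule bdd_belowI[of _ 0]) auto
qed (use assms in blast)

lemma d_star_le_card:
  assumes "finite A" and "A \<noteq> {}" and "0 \<notin> A"
  shows "d_star A \<le> card A"
proof -
  have "A \<inter> dil_inv a {1} = {a}" if "a \<in> A" for a
    using that by (auto simp: dil_inv_def)
  hence "d_star A \<le> real (card A) ^ 2 * real (card {1::real}) ^ 2 / (real (card A) * 1 ^ 3)"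
    by (intro d_star_le) (use assms in auto)
  thus ?thesis using assms(1,2) by (simp add: power2_eq_square)
qed

lemma d_star_le_popular:
  fixes A A' P :: "real set" and t :: real
  assumes "finite A" "A \<noteq> {}" "0 \<notin> A" "finite P" "P \<noteq> {}" "0 \<notin> P" "A' \<subseteq> A" "t > 0"
    and popular: "\<And>a. a \<in> A' \<Longrightarrow> t \<le> card {x \<in> P. x * a \<in> A}"
  shows "d_star A' \<le> real (card A) ^ 2 * real (card P) ^ 2 / (real (card A') * t ^ 3)"
proof -
  have card_R: "card (inverse ` P) = card P" by (rule card_image) (auto simp: inj_on_def)
  have "t \<le> card (A \<inter> dil_inv a (inverse ` P))" if "a \<in> A'" for a
  proof -
    have "(\<lambda>x. x * a) ` {x \<in> P. x * a \<in> A} \<subseteq> A \<inter> dil_inv a (inverse ` P)"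
      unfolding dil_inv_def image_image by (auto simp: mult.commute divide_inverse)
    hence "card ((\<lambda>x. x * a) ` {x \<in> P. x * a \<in> A}) \<le> card (A \<inter> dil_inv a (inverse ` P))"
      by (intro card_mono) (use assms(1) in auto)
    moreover have "a \<noteq> 0" using that assms(3,7) by auto
    ultimately have "card {x \<in> P. x * a \<in> A} \<le> card (A \<inter> dil_inv a (inverse ` P))"
      by (subst (asm) card_image) (auto simp: inj_on_def)
    thus ?thesis using popular[OF that] by linarith
  qed
  moreover have "card A' \<le> card A" by (rule card_mono) (use assms in auto)
  moreover have "0 \<notin> inverse ` P" using assms(6) by auto
  ultimately show ?thesis
    using d_star_le[of A "inverse ` P" A' t] assms card_R by auto
qed

lemma exists_popular_quotients:
  fixes A :: "real set"
  assumes fin: "finite A" and nz: "0 \<notin> A"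
  shows "\<exists>l\<ge>1. real (mult_energy A)
    \<le> 4 * log 2 (2 * real (card A)) * l ^ 2 * card {x \<in> quot_set A. l \<le> quot_rep A x}"
proof -
  have "real (quot_rep A x) \<le> card A" for x
    unfolding quot_rep_def by (simp add: card_mono fin)
  then obtain l where "1 \<le> l" and pigeon: "(\<Sum>x\<in>quot_set A. real (quot_rep A x) ^ 2)
      \<le> 2 ^ 2 * log 2 (2 * real (card A)) * l ^ 2 * card {x \<in> quot_set A. l \<le> quot_rep A x}"
    using dyadic_pigeonhole[of "quot_set A" "\<lambda>x. real (quot_rep A x)" "card A" 2]
      quot_rep_pos[OF fin nz] finite_quot_set[OF fin]
    by (auto simp: Suc_le_eq)
  moreover have "real (mult_energy A) \<le> (\<Sum>x\<in>quot_set A. real (quot_rep A x) ^ 2)"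
    using mult_energy_le_sum_quot_rep[OF fin] by (simp flip: of_nat_power of_nat_sum)
  ultimately show ?thesis by auto
qed

lemma exists_rich_elements:
  fixes A P :: "real set"
  assumes fin: "finite A" and nz: "0 \<notin> A" and fin_P: "finite P"
  shows "\<exists>t\<ge>1. (\<Sum>x\<in>P. real (quot_rep A x))
    \<le> 2 * log 2 (2 * real (card A)) * t * card {b \<in> A. t \<le> card {x \<in> P. x * b \<in> A}}"
proof -
  define f where "f b = card {x \<in> P. x * b \<in> A}" for b
  have "real (f b) \<le> card A" if "b \<in> A" for b
    unfolding f_def using card_mult_mem_le[OF fin] that nz by force
  then obtain t where "1 \<le> t" and pigeon: "(\<Sum>b\<in>{b\<in>A. 1 \<le> f b}. real (f b) ^ 1)
      \<le> 2 ^ 1 * log 2 (2 * real (card A)) * t ^ 1 * card {b \<in> {b\<in>A. 1 \<le> f b}. t \<le> f b}"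
    using dyadic_pigeonhole[of "{b\<in>A. 1 \<le> f b}" "\<lambda>b. real (f b)" "card A" 1] fin by auto
  have "{b \<in> {b\<in>A. 1 \<le> f b}. t \<le> f b} = {b \<in> A. t \<le> f b}"
    using \<open>1 \<le> t\<close> by auto
  moreover have "(\<Sum>x\<in>P. real (quot_rep A x)) = (\<Sum>b\<in>{b\<in>A. 1 \<le> f b}. real (f b))"
    using sum_card_mult_mem_eq_sum_quot_rep[OF fin fin_P] unfolding f_def
    by (subst sum.mono_neutral_left[OF fin]) (auto simp flip: of_nat_sum)
  ultimately show ?thesis using pigeon \<open>1 \<le> t\<close> unfolding f_def by auto
qed

lemma popular_pigeonhole_arith:
  fixes E L N S l t p m :: real
  assumes E: "E \<le> 4 * L * l ^ 2 * p" and S_ge: "l * p \<le> S" and S_le: "S \<le> 2 * L * t * m"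
    and "t \<le> N" "1 \<le> l" "1 \<le> t" "0 < p" "0 < m" "0 < L" "0 \<le> E"
  shows "E ^ 2 * (N ^ 2 * p ^ 2 / (m * t ^ 3)) \<le> 256 * L ^ 6 * N ^ 3 * m ^ 3"
proof -
  have S_pos: "0 < S" using S_ge assms by (smt (verit) mult_pos_pos)
  have "E ^ 2 * p ^ 2 \<le> (4 * L * l ^ 2 * p) ^ 2 * p ^ 2"
    by (intro mult_right_mono power_mono E) (use assms in auto)
  also have "\<dots> = 16 * L ^ 2 * (l * p) ^ 4" by (simp add: power_mult_distrib power2_eq_square power_def)
  also have "\<dots> \<le> 16 * L ^ 2 * (S ^ 3 * S)"
    using power_mono[OF S_ge, of 4] assms by (simp add: power_def)
  also have "\<dots> \<le> 16 * L ^ 2 * ((2 * L * t * m) ^ 3 * (2 * L * N * m))"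
    using S_le \<open>t \<le> N\<close> assms S_pos
    by (intro mult_left_mono mult_mono power_mono) (auto intro: order.trans mult_right_mono mult_left_mono)
  also have "\<dots> = 256 * L ^ 6 * N * m ^ 4 * t ^ 3" by (simp add: power_mult_distrib power_def)
  finally have key: "E ^ 2 * p ^ 2 \<le> 256 * L ^ 6 * N * m ^ 4 * t ^ 3" .
  have "E ^ 2 * (N ^ 2 * p ^ 2 / (m * t ^ 3)) = E ^ 2 * p ^ 2 * N ^ 2 / (m * t ^ 3)" by simp
  also have "\<dots> \<le> 256 * L ^ 6 * N * m ^ 4 * t ^ 3 * N ^ 2 / (m * t ^ 3)"
    by (intro divide_right_mono mult_right_mono key) (use assms in auto)
  also have "\<dots> = 256 * L ^ 6 * N ^ 3 * m ^ 3" using assms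
    by (simp add: field_simps power2_eq_square power3_eq_cube) (simp add: power_def)
  finally show ?thesis .
qed

lemma popular_subset_bounds_d_star:
  fixes A :: "real set"
  assumes fin: "finite A" and nz: "0 \<notin> A" and ne: "A \<noteq> {}"
  shows "\<exists>A' D. A' \<subseteq> A \<and> A' \<noteq> {} \<and> 0 < D \<and> d_star A' \<le> D \<and>
     real (mult_energy A) ^ 2 * D \<le> 256 * log 2 (2 * real (card A)) ^ 6 * real (card A) ^ 3 * real (card A') ^ 3"
proof -
  define N where "N = real (card A)"
  define L where "L = log 2 (2 * N)"
  define E where "E = real (mult_energy A)"
  have N_ge: "1 \<le> N" unfolding N_def using fin ne by (simp add: Suc_le_eq card_gt_0_iff)
  have E_pos: "0 < E" unfolding E_def using ne nz mult_energy_pos[OF fin] by fastforce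
  obtain l where "1 \<le> l" and E_le: "E \<le> 4 * L * l ^ 2 * card {x \<in> quot_set A. l \<le> quot_rep A x}"
    using exists_popular_quotients[OF fin nz] unfolding E_def L_def N_def by blast
  define P where "P = {x \<in> quot_set A. l \<le> quot_rep A x}"
  define S where "S = (\<Sum>x\<in>P. real (quot_rep A x))"
  have fin_P: "finite P" unfolding P_def using finite_quot_set[OF fin] by simp
  obtain t where "1 \<le> t" and S_le: "S \<le> 2 * L * t * card {b \<in> A. t \<le> card {x \<in> P. x * b \<in> A}}"
    using exists_rich_elements[OF fin nz fin_P] unfolding S_def L_def N_def by blast
  define A' where "A' = {b \<in> A. t \<le> card {x \<in> P. x * b \<in> A}}"
  have S_ge: "l * card P \<le> S"
    using sum_mono[of P "\<lambda>_. l" "\<lambda>x. real (quot_rep A x)"] unfolding S_def P_def by (auto simp: mult.commute)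
  have P_pos: "0 < card P"
  proof (rule ccontr)
    assume "\<not> 0 < card P"
    thus False using E_le E_pos unfolding P_def by simp
  qed
  have A'_pos: "0 < card A'"
  proof (rule ccontr)
    assume "\<not> 0 < card A'"
    moreover have "0 < l * card P" using P_pos \<open>1 \<le> l\<close> by simp
    ultimately show False using S_ge S_le unfolding A'_def by simp
  qed
  have "t \<le> N"
  proof -
    obtain b where "b \<in> A'" using A'_pos by (auto simp: card_gt_0_iff)
    thus ?thesis using card_mult_mem_le[OF fin, of b P] nz unfolding A'_def N_def by force
  qed
  define D where "D = N ^ 2 * real (card P) ^ 2 / (real (card A') * t ^ 3)"
  have "d_star A' \<le> D" unfolding D_def N_def
    by (rule d_star_le_popular[OF fin ne nz fin_P])
      (use P_pos zero_notin_quot_set[OF nz] \<open>1 \<le> t\<close> in \<open>auto simp: P_def A'_def card_gt_0_iff\<close>)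
  moreover have "E ^ 2 * D \<le> 256 * L ^ 6 * N ^ 3 * real (card A') ^ 3"
    unfolding D_def using E_le S_ge S_le \<open>t \<le> N\<close> \<open>1 \<le> l\<close> \<open>1 \<le> t\<close> P_pos A'_pos N_ge E_pos
    unfolding P_def A'_def L_def by (intro popular_pigeonhole_arith) auto
  moreover have "0 < D" unfolding D_def using N_ge P_pos A'_pos \<open>1 \<le> t\<close> by simp
  moreover have "A' \<subseteq> A" "A' \<noteq> {}" using A'_pos unfolding A'_def by (auto simp: card_gt_0_iff)
  ultimately show ?thesis unfolding E_def L_def N_def by blast
qed

lemma large_energy_case_arith:
  fixes n N E K L L' D m :: real
  assumes E: "n ^ 3 \<le> 2 * K * E" and ED: "E ^ 2 * D \<le> 256 * L' ^ 6 * N ^ 3 * m ^ 3"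
    and "0 \<le> L'" "L' \<le> L" "0 \<le> N" "N \<le> n" "1 \<le> n" "0 < K" "0 \<le> D" "0 \<le> m"
  shows "n ^ 3 * D \<le> 1024 * K ^ 2 * L ^ 6 * m ^ 3"
proof -
  have "n ^ 3 * (n ^ 3 * D) = (n ^ 3) ^ 2 * D" by (simp add: power2_eq_square)
  also have "\<dots> \<le> (2 * K * E) ^ 2 * D"
    using assms by (intro mult_right_mono power_mono) auto
  also have "\<dots> = 4 * K ^ 2 * (E ^ 2 * D)" by (simp add: power_mult_distrib)
  also have "\<dots> \<le> 4 * K ^ 2 * (256 * L ^ 6 * n ^ 3 * m ^ 3)"
    using ED assms by (intro mult_left_mono order.trans[OF ED] mult_right_mono mult_mono power_mono) auto
  also have "\<dots> = n ^ 3 * (1024 * K ^ 2 * L ^ 6 * m ^ 3)" by simp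
  finally show ?thesis by (rule mult_left_le_imp_le) (use \<open>1 \<le> n\<close> in simp)
qed

lemma many_nonzero_case_arith:
  fixes n N K L :: real
  assumes N: "n ^ 3 \<le> 2 * K * N ^ 2" and "N \<le> n" "1 \<le> N" "1 \<le> L" "0 < K"
  shows "n ^ 3 * N \<le> 1024 * K ^ 2 * L ^ 6 * N ^ 3"
proof -
  have "n ^ 2 * n ^ 4 = (n ^ 3) ^ 2" by (simp flip: power_add power_mult)
  also have "\<dots> \<le> (2 * K * N ^ 2) ^ 2" using assms by (intro power_mono) auto
  also have "\<dots> = 4 * K ^ 2 * N ^ 2 * N ^ 2" by (simp add: power_mult_distrib power2_eq_square)
  also have "\<dots> \<le> 4 * K ^ 2 * N ^ 2 * n ^ 2" using assms by (intro mult_left_mono power_mono) auto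
  also have "\<dots> = n ^ 2 * (4 * K ^ 2 * N ^ 2)" by simp
  finally have "n ^ 4 \<le> 4 * K ^ 2 * N ^ 2"
    by (rule mult_left_le_imp_le) (use assms in simp)
  have "n ^ 3 \<le> n ^ 4" using assms by (intro power_increasing) auto
  also note \<open>n ^ 4 \<le> 4 * K ^ 2 * N ^ 2\<close>
  also have "4 * K ^ 2 * N ^ 2 \<le> 1024 * K ^ 2 * L ^ 6 * N ^ 2"
  proof -
    have "1 \<le> L ^ 6" using assms by simp
    hence "4 * K ^ 2 * 1 \<le> 1024 * K ^ 2 * L ^ 6" by (intro mult_mono) auto
    thus ?thesis by (intro mult_right_mono) auto
  qed
  finally have "n ^ 3 * N \<le> 1024 * K ^ 2 * L ^ 6 * N ^ 2 * N"
    using assms by (intro mult_right_mono) auto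
  thus ?thesis by (simp add: power2_eq_square power3_eq_cube mult_ac)
qed

lemma subset_with_d_star_bound:
  fixes A :: "real set" and K :: real
  assumes fin: "finite A" and "A \<noteq> {}" and "0 < K" and E: "real (card A) ^ 3 / K \<le> mult_energy A"
  shows "\<exists>A' D. A' \<subseteq> A \<and> A' \<noteq> {} \<and> 0 < D \<and> d_star A' \<le> D \<and>
    real (card A) ^ 3 * D \<le> 1024 * K ^ 2 * log 2 (2 * real (card A)) ^ 6 * real (card A') ^ 3"
proof -
  define n where "n = real (card A)"
  define L where "L = log 2 (2 * n)"
  define A0 where "A0 = A - {0}"
  define N where "N = real (card A0)"
  have fin0: "finite A0" and nz0: "0 \<notin> A0" and "A0 \<subseteq> A" unfolding A0_def using fin by auto
  have "N \<le> n" unfolding N_def n_def A0_def using fin by (simp add: card_mono)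
  have "1 \<le> n" unfolding n_def using fin \<open>A \<noteq> {}\<close> by (simp add: Suc_le_eq card_gt_0_iff)
  have "1 \<le> L" unfolding L_def using \<open>1 \<le> n\<close> by simp
  have "real (mult_energy A) \<le> mult_energy A0 + N ^ 2"
    using mult_energy_le_remove_zero[OF fin] unfolding N_def A0_def
    by (simp flip: of_nat_power of_nat_add)
  hence "K * mult_energy A \<le> K * (mult_energy A0 + N ^ 2)"
    using \<open>0 < K\<close> by (intro mult_left_mono) auto
  hence energy_split: "n ^ 3 \<le> K * mult_energy A0 + K * N ^ 2"
    using E \<open>0 < K\<close> unfolding n_def by (simp add: field_simps)
  have "\<exists>A' D. A' \<subseteq> A \<and> A' \<noteq> {} \<and> 0 < D \<and> d_star A' \<le> D \<and>
    n ^ 3 * D \<le> 1024 * K ^ 2 * L ^ 6 * real (card A') ^ 3"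
  proof (cases "n ^ 3 \<le> 2 * K * mult_energy A0")
    case True
    hence "A0 \<noteq> {}" using \<open>1 \<le> n\<close> by (auto simp: mult_energy_def)
    then obtain A' D where A': "A' \<subseteq> A0" "A' \<noteq> {}" "0 < D" "d_star A' \<le> D" and
      ED: "real (mult_energy A0) ^ 2 * D \<le> 256 * log 2 (2 * N) ^ 6 * N ^ 3 * real (card A') ^ 3"
      using popular_subset_bounds_d_star[OF fin0 nz0] unfolding N_def by blast
    have "1 \<le> N" unfolding N_def using fin0 \<open>A0 \<noteq> {}\<close> by (simp add: Suc_le_eq card_gt_0_iff)
    hence "n ^ 3 * D \<le> 1024 * K ^ 2 * L ^ 6 * real (card A') ^ 3"
      using \<open>N \<le> n\<close> \<open>1 \<le> n\<close> \<open>0 < K\<close> A'(3) unfolding L_def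
      by (intro large_energy_case_arith[OF True ED]) auto
    thus ?thesis using A' \<open>A0 \<subseteq> A\<close> by blast
  next
    case False
    hence "n ^ 3 \<le> 2 * K * N ^ 2" using energy_split by linarith
    hence "A0 \<noteq> {}" using \<open>1 \<le> n\<close> \<open>0 < K\<close> by (auto simp: N_def)
    hence "1 \<le> N" unfolding N_def using fin0 by (simp add: Suc_le_eq card_gt_0_iff)
    have "n ^ 3 * N \<le> 1024 * K ^ 2 * L ^ 6 * N ^ 3"
      using many_nonzero_case_arith \<open>n ^ 3 \<le> 2 * K * N ^ 2\<close> \<open>N \<le> n\<close> \<open>1 \<le> N\<close> \<open>1 \<le> L\<close> \<open>0 < K\<close> .
    moreover have "d_star A0 \<le> N" unfolding N_def by (rule d_star_le_card[OF fin0 \<open>A0 \<noteq> {}\<close> nz0])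
    ultimately show ?thesis
      using \<open>A0 \<subseteq> A\<close> \<open>A0 \<noteq> {}\<close> \<open>1 \<le> N\<close> unfolding N_def by (intro exI[of _ A0]) auto
  qed
  thus ?thesis unfolding n_def L_def .
qed

lemma exists_scale:
  fixes m n L K D d :: real
  assumes "1 \<le> m" "m \<le> n" "1 \<le> L" "0 < K" "0 < D" "d \<le> D"
    and key: "n ^ 3 * D \<le> 1024 * K ^ 2 * L ^ 6 * m ^ 3"
  shows "\<exists>\<Delta>. \<Delta> \<ge> (1/32) * n / K \<and> m \<ge> (1/32) * (n ^ 2 / (K * \<Delta>)) / L powr 6 \<and>
     d \<le> (1 / (1/32)) * (K * m ^ 2 / (n * \<Delta>)) * L powr 6"
proof -
  define \<Delta> where "\<Delta> = 32 * K * m ^ 2 * L ^ 6 / (n * D)"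
  have "0 < n" using assms by linarith
  have L6: "L powr 6 = L ^ 6" using assms(3) by (simp add: powr_realpow)
  have "1 \<le> L ^ 6" using assms(3) by simp
  have "n ^ 2 * D \<le> 1024 * K ^ 2 * L ^ 6 * m ^ 2"
  proof -
    have "n ^ 2 * D * m \<le> n ^ 3 * D"
      using assms by (simp add: power2_eq_square power3_eq_cube mult_left_mono)
    also note key
    finally show ?thesis using assms by (simp add: power2_eq_square power3_eq_cube)
  qed
  hence scale: "(1/32) * n / K \<le> \<Delta>"
    unfolding \<Delta>_def using assms \<open>0 < n\<close> by (simp add: field_simps power2_eq_square)
  have "(1/32) * (n ^ 2 / (K * \<Delta>)) / L ^ 6 = n ^ 3 * D / (1024 * K ^ 2 * m ^ 2 * L ^ 12)"
    unfolding \<Delta>_def using assms \<open>0 < n\<close> by (simp add: field_simps power2_eq_square power3_eq_cube)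
  also have "\<dots> \<le> 1024 * K ^ 2 * L ^ 6 * m ^ 3 / (1024 * K ^ 2 * m ^ 2 * L ^ 12)"
    by (intro divide_right_mono key) (use assms in auto)
  also have "\<dots> = m / L ^ 6" using assms by (simp add: field_simps power2_eq_square power3_eq_cube)
  also have "\<dots> \<le> m" using assms \<open>1 \<le> L ^ 6\<close> by (simp add: divide_le_eq)
  finally have size: "(1/32) * (n ^ 2 / (K * \<Delta>)) / L powr 6 \<le> m" unfolding L6 .
  have "(1 / (1/32)) * (K * m ^ 2 / (n * \<Delta>)) * L powr 6 = D"
    unfolding \<Delta>_def L6 using assms \<open>0 < n\<close> by (simp add: field_simps)
  thus ?thesis using scale size \<open>d \<le> D\<close> by auto
qed

theorem lemma6p4:
  "\<exists>c::real. \<exists>C::real. c > 0 \<and> C \<ge> 0 \<and>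
    (\<forall>(A::real set) (K::real). finite A \<and> K > 0 \<and>
       real (mult_energy A) \<ge> real (card A) ^ 3 / K \<longrightarrow>
       (\<exists>A' \<Delta>. A' \<subseteq> A \<and> \<Delta> \<ge> c * real (card A) / K \<and>
          real (card A') \<ge> c * (real (card A) ^ 2 / (K * \<Delta>)) / (log 2 (2 * real (card A))) powr C \<and>
          d_star A' \<le> (1 / c) * (K * real (card A') ^ 2 / (real (card A) * \<Delta>)) * (log 2 (2 * real (card A))) powr C))"
proof (rule exI[of _ "1/32"], rule exI[of _ 6], intro conjI allI impI)
  fix A :: "real set" and K :: real
  assume "finite A \<and> K > 0 \<and> real (mult_energy A) \<ge> real (card A) ^ 3 / K"
  hence fin: "finite A" and "0 < K" and E: "real (card A) ^ 3 / K \<le> mult_energy A" by auto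
  let ?n = "real (card A)" and ?L = "log 2 (2 * real (card A))"
  show "\<exists>A' \<Delta>. A' \<subseteq> A \<and> \<Delta> \<ge> 1/32 * ?n / K \<and>
    real (card A') \<ge> 1/32 * (?n ^ 2 / (K * \<Delta>)) / ?L powr 6 \<and>
    d_star A' \<le> (1 / (1/32)) * (K * real (card A') ^ 2 / (?n * \<Delta>)) * ?L powr 6"
  proof (cases "A = {}")
    case True
    \<comment> \<open>the bound on \<open>d_star {}\<close> degenerates to \<open>0\<close>, as division by \<open>card {} = 0\<close> yields \<open>0\<close>\<close>
    have "d_star {} \<le> 0"
      using d_star_le[of "{1}" "{1}" "{}" 1] by simp
    thus ?thesis using True by (intro exI[of _ "{}"] exI[of _ 0]) auto
  next
    case False
    then obtain A' D where A': "A' \<subseteq> A" "A' \<noteq> {}" "0 < D" "d_star A' \<le> D"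
      and key: "?n ^ 3 * D \<le> 1024 * K ^ 2 * ?L ^ 6 * real (card A') ^ 3"
      using subset_with_d_star_bound[OF fin _ \<open>0 < K\<close> E] by blast
    have "1 \<le> card A'" "card A' \<le> card A" "1 \<le> ?L"
      using A' fin False finite_subset[OF A'(1) fin]
      by (auto simp: Suc_le_eq card_gt_0_iff card_mono)
    thus ?thesis using exists_scale[OF _ _ _ \<open>0 < K\<close> A'(3,4) key] A'(1) by auto
  qed
qed simp_all

end
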